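(* Consider the Gaussian broadcast model on $P=\mathbb Z_{\ge0}^2$ with $(\alpha_1,\alpha_2)=(1,1/2)$, fix $t\ge0$, and let $$Q_t(z,w):=\sum_{i=0}^t\sum_{j=0}^t\operatorname{Cov}\big(X_{(i,t-i)},X_{(j,t-j)}\big)z^iw^j\in\mathbb R[z,w].$$ Suppose there exist $c_0,\dots,c_t\in\mathbb R$ and $A_t\in\mathbb R\setminus\{0\}$ such that, as polynomials in $z$, $$[w^t]\Big((c_t+c_{t-1}w+\cdots+c_0w^t)\,Q_t(z,w)\Big)=A_t\sum_{i=0}^tz^i,$$ where $[w^t]R(z,w)$ denotes the coefficient of $w^t$ in $R$ viewed as a polynomial in $w$ with coefficients in $\mathbb R[z]$. Then $$S_t=\sqrt{\frac{\sum_{i=0}^tc_i}{A_t}},$$ where $S_t:=\sup\operatorname{Cov}(\zeta,X_0)/\sqrt{\operatorname{Var}(\zeta)}$, the supremum over all $\zeta=\sum_{i=0}^t b_iX_{(i,t-i)}$ with $b_i\in\mathbb R$ not all zero.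
   Context: Gaussian broadcast model on $P=\mathbb{Z}_{\ge0}^2$ with the componentwise order: $L_t=\{(i,t-i):0\le i\le t\}$; $\mathfrak p(v)$ = set of elements covered by $v$ (so $|\mathfrak p(v)|$ = number of positive coordinates). Let $X_0\sim\mathcal N(0,1)$, independently i.i.d. $W_{u\to v}\sim\mathcal N(0,1)$ for covering pairs $u\lessdot v$, $X_{(0,0)}=X_0$, and $X_v=\alpha_{|\mathfrak p(v)|}\sum_{u\in\mathfrak p(v)}(X_u+W_{u\to v})$ for $v\ne(0,0)$, with $\alpha_1=1,\alpha_2=1/2$. *)

theory Defs
  imports "HOL-Analysis.Analysis" "HOL-Computational_Algebra.Polynomial"
begin

text \<open>Every X_v is a (deterministic) linear combination
of the independent standard Gaussian sources: X_0 (source None) and W_{u->v}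
(source Some (u,v) for a covering pair u < v).  xcoef i j s is the coefficient of source s in
X_{(i,j)}, obtained by unfolding X_v = alpha_{|p(v)|} * sum_{u in p(v)} (X_u + W_{u->v})
with alpha_1 = 1, alpha_2 = 1/2.\<close>

type_synonym pt = "nat \<times> nat"
type_synonym source = "(pt \<times> pt) option"

fun xcoef :: "nat \<Rightarrow> nat \<Rightarrow> source \<Rightarrow> real" where
  "xcoef 0 0 s = (if s = None then 1 else 0)"
| "xcoef (Suc i) 0 s =
     xcoef i 0 s + (if s = Some ((i,0),(Suc i,0)) then 1 else 0)"
| "xcoef 0 (Suc j) s =
     xcoef 0 j s + (if s = Some ((0,j),(0,Suc j)) then 1 else 0)"
| "xcoef (Suc i) (Suc j) s = (1/2) *
     ((xcoef i (Suc j) s + (if s = Some ((i,Suc j),(Suc i,Suc j)) then 1 else 0))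
    + (xcoef (Suc i) j s + (if s = Some ((Suc i,j),(Suc i,Suc j)) then 1 else 0)))"

text \<open>All sources that can influence X_v for v with coordinates at most n (finite).\<close>
definition sources :: "nat \<Rightarrow> source set" where
  "sources n = insert None
     (Some ` {((a,b),(c,d)) | a b c d. a \<le> n \<and> b \<le> n \<and> c \<le> n \<and> d \<le> n})"

text \<open>Cov(X_(i,j), X_(k,l)) for i,j,k,l \<le> n: the sources are i.i.d. N(0,1), so the covariance
is the sum of products of coefficients.\<close>
definition cov :: "nat \<Rightarrow> pt \<Rightarrow> pt \<Rightarrow> real" where
  "cov n v w = (\<Sum>s\<in>sources n. xcoef (fst v) (snd v) s * xcoef (fst w) (snd w) s)"

definition covL :: "nat \<Rightarrow> nat \<Rightarrow> nat \<Rightarrow> real" where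
  "covL t i j = cov t (i, t - i) (j, t - j)"

text \<open>Q_t(z,w) as a polynomial in w with coefficients in R[z].\<close>
definition Qt :: "nat \<Rightarrow> real poly poly" where
  "Qt t = (\<Sum>j\<le>t. monom (\<Sum>i\<le>t. monom (covL t i j) i) j)"

definition cov_zeta_X0 :: "nat \<Rightarrow> (nat \<Rightarrow> real) \<Rightarrow> real" where
  "cov_zeta_X0 t b = (\<Sum>i\<le>t. b i * cov t (i, t - i) (0,0))"

definition var_zeta :: "nat \<Rightarrow> (nat \<Rightarrow> real) \<Rightarrow> real" where
  "var_zeta t b = (\<Sum>i\<le>t. \<Sum>j\<le>t. b i * b j * covL t i j)"

definition S :: "nat \<Rightarrow> real" where
  "S t = Sup {cov_zeta_X0 t b / sqrt (var_zeta t b) | b. \<exists>i\<le>t. b i \<noteq> 0}"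

end

theory Submission
  imports Defs
begin

text \<open>Every X_v has coefficient 1 on the source X_0, so Cov(\<zeta>, X_0) = \<Sum>b_i. Comparing coefficients
of z^i, the hypothesis says that \<eta> = \<Sum>c_k X_k satisfies Cov(X_i, \<eta>) = A for every i, hence
Cov(\<zeta>, \<eta>) = A Cov(\<zeta>, X_0). Cauchy-Schwarz then bounds Cov(\<zeta>, X_0) / sqrt Var(\<zeta>) by
sqrt Var(\<eta>) / |A|, with equality for \<zeta> = \<eta> / A, and Var(\<eta>) = A \<Sum>c_i.\<close>

definition gram :: "'s set \<Rightarrow> (nat \<Rightarrow> 's \<Rightarrow> real) \<Rightarrow> nat \<Rightarrow> nat \<Rightarrow> real" where
  "gram \<Omega> x i j = (\<Sum>s\<in>\<Omega>. x i s * x j s)"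

definition lincomb :: "nat \<Rightarrow> (nat \<Rightarrow> real) \<Rightarrow> (nat \<Rightarrow> 's \<Rightarrow> real) \<Rightarrow> 's \<Rightarrow> real" where
  "lincomb t b x s = (\<Sum>i\<le>t. b i * x i s)"

lemma gram_bilinear_form:
  "(\<Sum>i\<le>t. \<Sum>k\<le>t. b i * d k * gram \<Omega> x i k) = (\<Sum>s\<in>\<Omega>. lincomb t b x s * lincomb t d x s)"
proof -
  have "(\<Sum>i\<le>t. \<Sum>k\<le>t. b i * d k * gram \<Omega> x i k)
      = (\<Sum>i\<le>t. \<Sum>k\<le>t. \<Sum>s\<in>\<Omega>. b i * x i s * (d k * x k s))"
    by (simp add: gram_def sum_distrib_left mult_ac)
  also have "\<dots> = (\<Sum>s\<in>\<Omega>. \<Sum>i\<le>t. \<Sum>k\<le>t. b i * x i s * (d k * x k s))"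
    by (subst sum.swap, subst (2) sum.swap) simp
  also have "\<dots> = (\<Sum>s\<in>\<Omega>. lincomb t b x s * lincomb t d x s)"
    by (simp add: lincomb_def sum_product)
  finally show ?thesis .
qed

lemma sqrt_gram_form_eq_L2_set:
  "sqrt (\<Sum>i\<le>t. \<Sum>j\<le>t. b i * b j * gram \<Omega> x i j) = L2_set (lincomb t b x) \<Omega>"
  by (simp add: gram_bilinear_form L2_set_def power2_eq_square)

lemma abs_sum_mult_le_L2_set: "\<bar>\<Sum>s\<in>\<Omega>. f s * g s\<bar> \<le> L2_set f \<Omega> * L2_set g \<Omega>"
proof -
  have "\<bar>\<Sum>s\<in>\<Omega>. f s * g s\<bar> \<le> (\<Sum>s\<in>\<Omega>. \<bar>f s\<bar> * \<bar>g s\<bar>)"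
    by (metis (no_types, lifting) abs_mult sum.cong sum_abs)
  also have "\<dots> \<le> L2_set f \<Omega> * L2_set g \<Omega>"
    by (rule L2_set_mult_ineq)
  finally show ?thesis .
qed

context
  fixes \<Omega> :: "'s set" and x :: "nat \<Rightarrow> 's \<Rightarrow> real" and t :: nat
    and c :: "nat \<Rightarrow> real" and A :: real
  assumes finite_\<Omega>: "finite \<Omega>" and A_nonzero: "A \<noteq> 0"
    and gram_c: "\<And>i. i \<le> t \<Longrightarrow> (\<Sum>k\<le>t. c k * gram \<Omega> x i k) = A"
begin

lemma sum_lincomb_mult_lincomb_c:
  "(\<Sum>s\<in>\<Omega>. lincomb t b x s * lincomb t c x s) = A * (\<Sum>i\<le>t. b i)"
proof -
  have "(\<Sum>s\<in>\<Omega>. lincomb t b x s * lincomb t c x s)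
      = (\<Sum>i\<le>t. b i * (\<Sum>k\<le>t. c k * gram \<Omega> x i k))"
    by (simp add: gram_bilinear_form [symmetric] sum_distrib_left mult.assoc)
  also have "\<dots> = A * (\<Sum>i\<le>t. b i)"
    by (simp add: gram_c sum_distrib_left mult.commute)
  finally show ?thesis .
qed

lemma L2_set_lincomb_c_squared: "(L2_set (lincomb t c x) \<Omega>)\<^sup>2 = A * (\<Sum>i\<le>t. c i)"
proof -
  have "(L2_set (lincomb t c x) \<Omega>)\<^sup>2 = (\<Sum>s\<in>\<Omega>. lincomb t c x s * lincomb t c x s)"
    by (simp add: L2_set_def sum_nonneg power2_eq_square)
  then show ?thesis
    by (simp add: sum_lincomb_mult_lincomb_c)
qed

lemma L2_set_lincomb_c_pos: "L2_set (lincomb t c x) \<Omega> > 0"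
proof -
  have "L2_set (lincomb t c x) \<Omega> \<noteq> 0"
  proof
    assume "L2_set (lincomb t c x) \<Omega> = 0"
    then have "\<forall>s\<in>\<Omega>. lincomb t c x s = 0"
      using finite_\<Omega> by (simp add: L2_set_eq_0_iff)
    then show False
      using sum_lincomb_mult_lincomb_c [of "\<lambda>i. if i = 0 then 1 else 0"] A_nonzero by simp
  qed
  then show ?thesis
    by (simp add: order_le_neq_trans)
qed

lemma sum_div_L2_set_lincomb_le:
  "(\<Sum>i\<le>t. b i) / L2_set (lincomb t b x) \<Omega> \<le> L2_set (lincomb t c x) \<Omega> / \<bar>A\<bar>"
proof (cases "L2_set (lincomb t b x) \<Omega> = 0")
  case True
  then show ?thesis
    by simp
next
  case False
  then have pos: "L2_set (lincomb t b x) \<Omega> > 0"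
    using L2_set_nonneg [of "lincomb t b x" \<Omega>] by linarith
  have "\<bar>A\<bar> * \<bar>\<Sum>i\<le>t. b i\<bar> \<le> L2_set (lincomb t b x) \<Omega> * L2_set (lincomb t c x) \<Omega>"
    using abs_sum_mult_le_L2_set [of "lincomb t b x" "lincomb t c x" \<Omega>]
    by (simp add: sum_lincomb_mult_lincomb_c abs_mult)
  then have "\<bar>\<Sum>i\<le>t. b i\<bar> / L2_set (lincomb t b x) \<Omega> \<le> L2_set (lincomb t c x) \<Omega> / \<bar>A\<bar>"
    using pos A_nonzero by (simp add: field_simps)
  moreover have "(\<Sum>i\<le>t. b i) / L2_set (lincomb t b x) \<Omega>
      \<le> \<bar>\<Sum>i\<le>t. b i\<bar> / L2_set (lincomb t b x) \<Omega>"
    using pos by (simp add: divide_right_mono)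
  ultimately show ?thesis
    by linarith
qed

lemma sum_div_L2_set_lincomb_c_div:
  "(\<Sum>i\<le>t. c i / A) / L2_set (lincomb t (\<lambda>i. c i / A) x) \<Omega> = L2_set (lincomb t c x) \<Omega> / \<bar>A\<bar>"
proof -
  define N where "N = L2_set (lincomb t c x) \<Omega>"
  have "lincomb t (\<lambda>i. c i / A) x = (\<lambda>s. (1 / A) * lincomb t c x s)"
    by (simp add: fun_eq_iff lincomb_def sum_divide_distrib)
  then have "L2_set (lincomb t (\<lambda>i. c i / A) x) \<Omega> = N / \<bar>A\<bar>"
    using L2_set_right_distrib [of "1 / \<bar>A\<bar>" "lincomb t c x" \<Omega>]
    by (simp add: N_def L2_set_def power_divide)
  moreover have "(\<Sum>i\<le>t. c i / A) = N\<^sup>2 / A\<^sup>2"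
    unfolding N_def L2_set_lincomb_c_squared using A_nonzero
    by (simp add: power2_eq_square flip: sum_divide_distrib)
  ultimately have "(\<Sum>i\<le>t. c i / A) / L2_set (lincomb t (\<lambda>i. c i / A) x) \<Omega>
      = (N / \<bar>A\<bar>)\<^sup>2 / (N / \<bar>A\<bar>)"
    by (simp add: power_divide)
  also have "\<dots> = N / \<bar>A\<bar>"
    using A_nonzero L2_set_lincomb_c_pos by (simp add: N_def power2_eq_square del: abs_mult_self_eq)
  finally show ?thesis
    by (simp add: N_def)
qed

lemma Sup_sum_div_sqrt_gram_form:
  "Sup {(\<Sum>i\<le>t. b i) / sqrt (\<Sum>i\<le>t. \<Sum>j\<le>t. b i * b j * gram \<Omega> x i j) | b. \<exists>i\<le>t. b i \<noteq> 0}
    = sqrt ((\<Sum>i\<le>t. c i) / A)"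
proof -
  define N where "N = L2_set (lincomb t c x) \<Omega>"
  have "(\<Sum>i\<le>t. c i) \<noteq> 0"
    using L2_set_lincomb_c_pos L2_set_lincomb_c_squared by auto
  then have "\<exists>i\<le>t. c i / A \<noteq> 0"
    using A_nonzero by (auto intro: sum.neutral)
  then have "N / \<bar>A\<bar> \<in> {(\<Sum>i\<le>t. b i) / L2_set (lincomb t b x) \<Omega> | b. \<exists>i\<le>t. b i \<noteq> 0}"
    unfolding N_def sum_div_L2_set_lincomb_c_div [symmetric] by blast
  then have "Sup {(\<Sum>i\<le>t. b i) / L2_set (lincomb t b x) \<Omega> | b. \<exists>i\<le>t. b i \<noteq> 0} = N / \<bar>A\<bar>"
    using sum_div_L2_set_lincomb_le unfolding N_def by (intro cSup_eq_maximum) auto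
  moreover have "(\<Sum>i\<le>t. c i) / A = (N / \<bar>A\<bar>)\<^sup>2"
    unfolding power_divide power2_abs N_def L2_set_lincomb_c_squared using A_nonzero
    by (simp add: power2_eq_square)
  ultimately show ?thesis
    using L2_set_lincomb_c_pos by (simp add: sqrt_gram_form_eq_L2_set N_def)
qed

end

lemma coeff_sum_monom: "coeff (\<Sum>i\<le>t. monom (f i) i) n = (if n \<le> t then f n else 0)"
  by (simp add: coeff_sum coeff_monom)

lemma coeff_reversed_mult_sum_monom:
  fixes a q :: "nat \<Rightarrow> 'a::comm_semiring_1"
  shows "coeff ((\<Sum>k\<le>t. monom (a k) (t - k)) * (\<Sum>j\<le>t. monom (q j) j)) t = (\<Sum>k\<le>t. a k * q k)"
proof -
  have "coeff ((\<Sum>k\<le>t. monom (a k) (t - k)) * (\<Sum>j\<le>t. monom (q j) j)) t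
      = (\<Sum>k\<le>t. \<Sum>j\<le>t. if t - k + j = t then a k * q j else 0)"
    by (simp add: sum_product mult_monom coeff_sum coeff_monom)
  also have "\<dots> = (\<Sum>k\<le>t. \<Sum>j\<le>t. if j = k then a k * q j else 0)"
    by (intro sum.cong refl) auto
  also have "\<dots> = (\<Sum>k\<le>t. a k * q k)"
    by (simp add: sum.delta)
  finally show ?thesis .
qed

lemma coeff_reversed_mult_Qt:
  "coeff ((\<Sum>k\<le>t. monom [:c k:] (t - k)) * Qt t) t
    = (\<Sum>i\<le>t. monom (\<Sum>k\<le>t. c k * covL t i k) i)"
proof -
  have "coeff ((\<Sum>k\<le>t. monom [:c k:] (t - k)) * Qt t) t
      = (\<Sum>k\<le>t. [:c k:] * (\<Sum>i\<le>t. monom (covL t i k) i))"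
    unfolding Qt_def by (rule coeff_reversed_mult_sum_monom)
  also have "\<dots> = (\<Sum>k\<le>t. \<Sum>i\<le>t. monom (c k * covL t i k) i)"
    by (simp add: sum_distrib_left smult_monom)
  also have "\<dots> = (\<Sum>i\<le>t. monom (\<Sum>k\<le>t. c k * covL t i k) i)"
    by (subst sum.swap) (simp add: monom_sum)
  finally show ?thesis .
qed

lemma xcoef_None: "xcoef i j None = 1"
  by (induction i j "None::source" rule: xcoef.induct) auto

lemma finite_sources: "finite (sources n)"
proof -
  have "{((a,b),(c,d)) | a b c d. a \<le> n \<and> b \<le> n \<and> c \<le> n \<and> d \<le> n}
      = ({..n} \<times> {..n}) \<times> ({..n} \<times> {..n})"
    by auto
  then show ?thesis
    by (simp add: sources_def)
qed

lemma cov_zeta_X0_eq_sum: "cov_zeta_X0 t b = (\<Sum>i\<le>t. b i)"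
proof -
  have "cov t (i, t - i) (0, 0) = 1" for i
    using finite_sources
    by (simp add: cov_def sources_def xcoef_None sum.delta' if_distrib cong: if_cong)
  then show ?thesis
    by (simp add: cov_zeta_X0_def)
qed

lemma covL_eq_gram: "covL t = gram (sources t) (\<lambda>i. xcoef i (t - i))"
  by (simp add: fun_eq_iff covL_def cov_def gram_def)

theorem lemmal:
  fixes t :: nat and c :: "nat \<Rightarrow> real" and A :: real
  assumes "A \<noteq> 0"
    and "coeff ((\<Sum>k\<le>t. monom [:c k:] (t - k)) * Qt t) t = smult A (\<Sum>i\<le>t. monom 1 i)"
  shows "S t = sqrt ((\<Sum>i\<le>t. c i) / A)"
proof -
  have "(\<Sum>k\<le>t. c k * covL t i k) = A" if "i \<le> t" for i
    using arg_cong [OF assms(2), of "\<lambda>p. coeff p i"] that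
    by (simp add: coeff_reversed_mult_Qt coeff_sum_monom)
  then have "Sup {(\<Sum>i\<le>t. b i) / sqrt (var_zeta t b) | b. \<exists>i\<le>t. b i \<noteq> 0}
      = sqrt ((\<Sum>i\<le>t. c i) / A)"
    unfolding var_zeta_def covL_eq_gram
    by (intro Sup_sum_div_sqrt_gram_form finite_sources assms(1))
  then show ?thesis
    by (simp add: S_def cov_zeta_X0_eq_sum)
qed

end
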